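(* Let $d\ge3$, $\beta>0$, $g:\mathbb{R}^d\to\mathbb{R}$ Lipschitz. There are positive constants $C_1,C_2,C_3,C_4$ depending only on $d,\beta,g$ such that for any $\varepsilon>0$, $t\in\mathbb{Z}_{\ge0}$, $x\in\mathbb{Z}^d$, \[ C_1e^{-C_2\varepsilon(|x|+\sqrt t)}\le G_\varepsilon(t,x)\le C_3e^{C_4(\varepsilon|x|+\varepsilon^2t)}. \]
   Context: $\{S_n\}_{n\ge0}$ is simple symmetric random walk on $\mathbb{Z}^d$ started at the origin; $g_\varepsilon(x)=g(\varepsilon x)$ and $G_\varepsilon(t,x)=\mathbb{E}(e^{\beta g_\varepsilon(S_t+x)})$ for $t\in\mathbb{Z}_{\ge0}$, $x\in\mathbb{Z}^d$. *)

theory Defs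
  imports "HOL-Analysis.Analysis" "HOL-Probability.Probability"
begin

text \<open>Lattice points of Z^d are modelled as int^'d (dimension d = CARD('d)).\<close>

definition unit_lattice :: "'d::finite \<Rightarrow> int^'d" where
  "unit_lattice i = (\<chi> j. if j = i then 1 else 0)"

definition srw_step :: "(int^'d::finite) pmf" where
  "srw_step = pmf_of_set ((\<lambda>i. unit_lattice i) ` UNIV \<union> (\<lambda>i. - unit_lattice i) ` UNIV)"

primrec srw :: "nat \<Rightarrow> (int^'d::finite) pmf" where
  "srw 0 = return_pmf 0"
| "srw (Suc n) = bind_pmf (srw n) (\<lambda>s. map_pmf (\<lambda>e. s + e) srw_step)"

definition lattice_to_real :: "int^'d::finite \<Rightarrow> real^'d" where
  "lattice_to_real x = (\<chi> j. real_of_int (x $ j))"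

definition G_eps :: "real \<Rightarrow> (real^'d::finite \<Rightarrow> real) \<Rightarrow> real \<Rightarrow> nat \<Rightarrow> int^'d \<Rightarrow> real" where
  "G_eps \<beta> g \<epsilon> t x =
     measure_pmf.expectation (srw t) (\<lambda>s. exp (\<beta> * g (\<epsilon> *\<^sub>R lattice_to_real (s + x))))"

end

(* Write X = |x| and L for a Lipschitz constant of g. The exponent beta g(eps (S_t + x)) differs
   from beta g(0) by at most beta L eps (X + |S_t|), so both bounds reduce to exponential moments
   of |S_t|. Since |v| <= sum_i |v_i| is the largest of the 2^d signed sums sigma . v, and
   E exp(sigma . S_t) = cosh(a)^t <= exp(a^2 t) for sigma in {-a, a}^d, one gets
   E exp(a |S_t|) <= 2^d exp(a^2 t); this is the upper bound. For the lower bound, Jensen's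
   inequality gives G >= exp(E beta g(eps (S_t + x))), and E |S_t| <= (d ln 2 + 1) sqrt t follows
   from the same exponential moment with a = 1 / sqrt t and Jensen once more. *)
theory Submission
  imports Defs
begin

abbreviation srw_steps :: "(int^'d::finite) set" where
  "srw_steps \<equiv> range unit_lattice \<union> range (\<lambda>i. - unit_lattice i)"

lemma set_pmf_srw_step: "set_pmf srw_step = srw_steps"
  unfolding srw_step_def by (rule set_pmf_of_set) auto

lemma finite_set_pmf_srw: "finite (set_pmf (srw n))"
  by (induction n) (auto simp: set_pmf_srw_step)

lemma integrable_srw: "integrable (measure_pmf (srw n)) (f :: int^'d::finite \<Rightarrow> real)"
  by (rule integrable_measure_pmf_finite[OF finite_set_pmf_srw])

lemma inj_unit_lattice: "inj unit_lattice"
  by (auto simp: inj_def unit_lattice_def vec_eq_iff split: if_splits)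

lemma inj_uminus_unit_lattice: "inj (\<lambda>i. - unit_lattice i)"
  by (auto simp: inj_def unit_lattice_def vec_eq_iff split: if_splits)

lemma unit_lattice_neq_uminus: "unit_lattice i \<noteq> - unit_lattice j"
proof
  assume "unit_lattice i = - unit_lattice j"
  then have "unit_lattice i $ i = - (unit_lattice j $ i)" by simp
  then show False by (auto simp: unit_lattice_def split: if_splits)
qed

lemma sum_srw_steps:
  "sum h srw_steps = (\<Sum>i\<in>UNIV. h (unit_lattice i) + h (- unit_lattice i))"
proof -
  have "sum h srw_steps = sum h (range unit_lattice) + sum h (range (\<lambda>i. - unit_lattice i))"
    by (rule sum.union_disjoint) (auto simp: unit_lattice_neq_uminus)
  also have "\<dots> = (\<Sum>i\<in>UNIV. h (unit_lattice i)) + (\<Sum>i\<in>UNIV. h (- unit_lattice i))"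
    using sum.reindex[OF inj_unit_lattice, of h] sum.reindex[OF inj_uminus_unit_lattice, of h]
    by (simp add: comp_def)
  finally show ?thesis by (simp add: sum.distrib)
qed

lemma expectation_srw_step:
  "measure_pmf.expectation (srw_step :: (int^'d::finite) pmf) h
     = (\<Sum>i\<in>UNIV. h (unit_lattice i) + h (- unit_lattice i)) / (2 * CARD('d))"
proof -
  have "measure_pmf.expectation (srw_step :: (int^'d) pmf) h = sum h srw_steps / card (srw_steps :: (int^'d) set)"
    unfolding srw_step_def by (rule integral_pmf_of_set) auto
  also have "card (srw_steps :: (int^'d) set) = (\<Sum>e\<in>(srw_steps :: (int^'d) set). 1)" by simp
  also have "\<dots> = 2 * CARD('d)" by (subst sum_srw_steps) simp
  finally show ?thesis by (simp add: sum_srw_steps)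
qed

lemma expectation_srw_Suc:
  fixes f :: "int^'d::finite \<Rightarrow> real"
  assumes "\<And>s. f s \<ge> 0"
  shows "measure_pmf.expectation (srw (Suc n)) f =
    measure_pmf.expectation (srw n) (\<lambda>s. measure_pmf.expectation srw_step (\<lambda>e. f (s + e)))"
proof -
  let ?N = "\<lambda>s. map_pmf (\<lambda>e. s + e) (srw_step :: (int^'d) pmf)"
  have "(\<integral>\<^sup>+ x. f x \<partial>srw (Suc n)) = (\<integral>\<^sup>+ s. \<integral>\<^sup>+ y. f y \<partial>?N s \<partial>srw n)"
    by simp
  also have "\<dots> = (\<integral>\<^sup>+ s. measure_pmf.expectation (?N s) f \<partial>srw n)"
    by (intro nn_integral_cong nn_integral_eq_integral integrable_measure_pmf_finite)
       (auto simp: set_pmf_srw_step assms)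
  also have "\<dots> = measure_pmf.expectation (srw n) (\<lambda>s. measure_pmf.expectation (?N s) f)"
    by (intro nn_integral_eq_integral integrable_srw) (auto intro!: integral_nonneg_AE simp: assms)
  finally show ?thesis
    by (subst integral_eq_nn_integral) (auto simp: assms integral_nonneg_AE)
qed

lemma lattice_to_real_add: "lattice_to_real (s + x) = lattice_to_real s + lattice_to_real x"
  by (simp add: lattice_to_real_def vec_eq_iff)

lemma lattice_to_real_unit_lattice: "lattice_to_real (unit_lattice i) = axis i 1"
  by (simp add: lattice_to_real_def unit_lattice_def axis_def vec_eq_iff)

lemma lattice_to_real_uminus: "lattice_to_real (- s) = - lattice_to_real s"
  by (simp add: lattice_to_real_def vec_eq_iff)

lemma expectation_srw_step_exp_inner:
  "measure_pmf.expectation (srw_step :: (int^'d::finite) pmf) (\<lambda>e. exp (c \<bullet> lattice_to_real e))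
     = (\<Sum>i\<in>UNIV. cosh (c $ i)) / CARD('d)"
  by (simp add: expectation_srw_step lattice_to_real_unit_lattice lattice_to_real_uminus
      inner_axis cosh_def sum_divide_distrib)

lemma expectation_srw_exp_inner:
  "measure_pmf.expectation (srw n :: (int^'d::finite) pmf) (\<lambda>s. exp (c \<bullet> lattice_to_real s))
     = ((\<Sum>i\<in>UNIV. cosh (c $ i)) / CARD('d)) ^ n"
proof (induction n)
  case 0
  then show ?case by (simp add: lattice_to_real_def inner_vec_def)
next
  case (Suc n)
  have "measure_pmf.expectation (srw (Suc n)) (\<lambda>s. exp (c \<bullet> lattice_to_real s))
     = measure_pmf.expectation (srw n) (\<lambda>s. exp (c \<bullet> lattice_to_real s) *
         measure_pmf.expectation srw_step (\<lambda>e. exp (c \<bullet> lattice_to_real e)))"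
    by (subst expectation_srw_Suc) (simp_all add: lattice_to_real_add inner_add_right exp_add)
  then show ?case
    by (simp add: expectation_srw_step_exp_inner Suc)
qed

lemma cosh_le_exp_square: "cosh (a::real) \<le> exp (a\<^sup>2)"
proof -
  have "cosh b \<le> exp (b\<^sup>2)" if b: "b \<ge> 0" for b :: real
  proof (cases "b \<le> 1")
    case True
    have "exp (-b) = 1 / exp b" by (simp add: exp_minus field_simps)
    also have "\<dots> \<le> 1 / (1 + b)"
      using b exp_ge_add_one_self[of b] by (intro divide_left_mono) auto
    also have "\<dots> \<le> 1 - b + b\<^sup>2"
      using b by (simp add: divide_simps algebra_simps power2_eq_square)
    finally have "cosh b \<le> 1 + b\<^sup>2"
      using exp_bound[OF b True] by (simp add: cosh_def)
    also have "\<dots> \<le> exp (b\<^sup>2)" by (rule exp_ge_add_one_self)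
    finally show ?thesis .
  next
    case False
    have "cosh b \<le> exp b" using b by (simp add: cosh_def)
    also have "\<dots> \<le> exp (b\<^sup>2)" using False by (simp add: power2_eq_square)
    finally show ?thesis .
  qed
  from this[of "\<bar>a\<bar>"] show ?thesis by (cases "a \<ge> 0") auto
qed

lemma expectation_srw_exp_inner_le:
  assumes "\<And>i. \<bar>c $ i\<bar> \<le> a"
  shows "measure_pmf.expectation (srw n :: (int^'d::finite) pmf) (\<lambda>s. exp (c \<bullet> lattice_to_real s))
     \<le> exp (a\<^sup>2 * n)"
proof -
  have "cosh (c $ i) \<le> exp (a\<^sup>2)" for i
  proof -
    have "(c $ i)\<^sup>2 \<le> a\<^sup>2"
      using power_mono[OF assms[of i] abs_ge_zero, where n=2] by simp
    then show ?thesis by (intro order_trans[OF cosh_le_exp_square]) simp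
  qed
  then have "(\<Sum>i\<in>UNIV. cosh (c $ i)) \<le> CARD('d) * exp (a\<^sup>2)"
    using sum_mono[of UNIV "\<lambda>i. cosh (c $ i)" "\<lambda>_. exp (a\<^sup>2)"] by simp
  then have "(\<Sum>i\<in>UNIV. cosh (c $ i)) / CARD('d) \<le> exp (a\<^sup>2)"
    by (simp add: divide_le_eq mult.commute)
  then have "((\<Sum>i\<in>UNIV. cosh (c $ i)) / CARD('d)) ^ n \<le> exp (a\<^sup>2) ^ n"
    by (intro power_mono divide_nonneg_nonneg sum_nonneg) auto
  then show ?thesis
    by (simp add: expectation_srw_exp_inner exp_of_nat2_mult)
qed

lemma exp_norm_le_sum_sign_vectors:
  fixes v :: "real^'n"
  assumes "a \<ge> 0"
  shows "exp (a * norm v) \<le> (\<Sum>\<sigma>\<in>UNIV. exp ((\<chi> i. if \<sigma> i then a else - a) \<bullet> v))"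
proof -
  let ?\<sigma> = "\<lambda>i. v $ i \<ge> 0"
  have "a * norm v \<le> a * (\<Sum>i\<in>UNIV. \<bar>v $ i\<bar>)"
    by (rule mult_left_mono[OF norm_le_l1_cart assms])
  also have "\<dots> = (\<chi> i. if ?\<sigma> i then a else - a) \<bullet> v"
    by (auto simp: inner_vec_def sum_distrib_left intro!: sum.cong)
  finally have "exp (a * norm v) \<le> exp ((\<chi> i. if ?\<sigma> i then a else - a) \<bullet> v)"
    by simp
  also have "\<dots> \<le> (\<Sum>\<sigma>\<in>UNIV. exp ((\<chi> i. if \<sigma> i then a else - a) \<bullet> v))"
    by (rule member_le_sum) auto
  finally show ?thesis .
qed

lemma expectation_srw_exp_norm_le:
  assumes "a \<ge> 0"
  shows "measure_pmf.expectation (srw n :: (int^'d::finite) pmf) (\<lambda>s. exp (a * norm (lattice_to_real s)))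
    \<le> 2 ^ CARD('d) * exp (a\<^sup>2 * n)"
proof -
  have "measure_pmf.expectation (srw n :: (int^'d) pmf) (\<lambda>s. exp (a * norm (lattice_to_real s)))
     \<le> measure_pmf.expectation (srw n :: (int^'d) pmf)
          (\<lambda>s. \<Sum>\<sigma>\<in>UNIV. exp ((\<chi> i. if \<sigma> i then a else - a) \<bullet> lattice_to_real s))"
    by (intro integral_mono integrable_srw) (rule exp_norm_le_sum_sign_vectors[OF assms])
  also have "\<dots> = (\<Sum>\<sigma>\<in>UNIV. measure_pmf.expectation (srw n :: (int^'d) pmf)
          (\<lambda>s. exp ((\<chi> i. if \<sigma> i then a else - a) \<bullet> lattice_to_real s)))"
    by (intro Bochner_Integration.integral_sum integrable_srw)
  also have "\<dots> \<le> (\<Sum>\<sigma>\<in>(UNIV :: ('d \<Rightarrow> bool) set). exp (a\<^sup>2 * n))"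
    using assms by (intro sum_mono expectation_srw_exp_inner_le) auto
  also have "\<dots> = 2 ^ CARD('d) * exp (a\<^sup>2 * n)"
    by (simp add: card_fun)
  finally show ?thesis .
qed

lemma exp_expectation_srw_le:
  fixes f :: "int^'d::finite \<Rightarrow> real"
  shows "exp (measure_pmf.expectation (srw n) f) \<le> measure_pmf.expectation (srw n) (\<lambda>s. exp (f s))"
  by (rule measure_pmf.jensens_inequality[where I = UNIV]) (auto intro: integrable_srw exp_convex)

lemma expectation_srw_norm_le:
  "measure_pmf.expectation (srw n :: (int^'d::finite) pmf) (\<lambda>s. norm (lattice_to_real s))
    \<le> (CARD('d) * ln 2 + 1) * sqrt n"
proof (cases "n = 0")
  case True
  then show ?thesis by (simp add: lattice_to_real_def vec_eq_iff)
next
  case False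
  define a where "a = 1 / sqrt n"
  have a: "a > 0" "a\<^sup>2 * n = 1" using False by (simp_all add: a_def power_divide)
  let ?E = "measure_pmf.expectation (srw n :: (int^'d) pmf) (\<lambda>s. norm (lattice_to_real s))"
  have "exp (a * ?E) \<le> measure_pmf.expectation (srw n :: (int^'d) pmf) (\<lambda>s. exp (a * norm (lattice_to_real s)))"
    using exp_expectation_srw_le[of n "\<lambda>s. a * norm (lattice_to_real s)"] by simp
  also have "\<dots> \<le> 2 ^ CARD('d) * exp (a\<^sup>2 * n)"
    using a by (intro expectation_srw_exp_norm_le) simp
  also have "\<dots> = exp (CARD('d) * ln 2 + 1)"
    by (simp add: a exp_add exp_of_nat_mult)
  finally have "a * ?E \<le> CARD('d) * ln 2 + 1" by simp
  then show ?thesis using a by (simp add: a_def field_simps)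
qed

lemma expectation_srw_exp_le:
  fixes f :: "int^'d::finite \<Rightarrow> real"
  assumes "\<And>s. f s \<le> c + B * norm (lattice_to_real s)" and "B \<ge> 0"
  shows "measure_pmf.expectation (srw n) (\<lambda>s. exp (f s)) \<le> 2 ^ CARD('d) * exp (c + B\<^sup>2 * n)"
proof -
  have "measure_pmf.expectation (srw n) (\<lambda>s. exp (f s))
      \<le> measure_pmf.expectation (srw n :: (int^'d) pmf) (\<lambda>s. exp c * exp (B * norm (lattice_to_real s)))"
    using assms(1) by (intro integral_mono integrable_srw) (simp flip: exp_add)
  also have "\<dots> = exp c * measure_pmf.expectation (srw n :: (int^'d) pmf) (\<lambda>s. exp (B * norm (lattice_to_real s)))"
    by simp
  also have "\<dots> \<le> exp c * (2 ^ CARD('d) * exp (B\<^sup>2 * n))"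
    using assms(2) by (intro mult_left_mono expectation_srw_exp_norm_le) auto
  finally show ?thesis by (simp add: exp_add mult_ac)
qed

lemma exp_le_expectation_srw_exp:
  fixes f :: "int^'d::finite \<Rightarrow> real"
  assumes "\<And>s. c - B * norm (lattice_to_real s) \<le> f s" and "B \<ge> 0"
  shows "exp (c - B * (CARD('d) * ln 2 + 1) * sqrt n) \<le> measure_pmf.expectation (srw n) (\<lambda>s. exp (f s))"
proof -
  have "c - B * (CARD('d) * ln 2 + 1) * sqrt n
      \<le> c - B * measure_pmf.expectation (srw n :: (int^'d) pmf) (\<lambda>s. norm (lattice_to_real s))"
    using mult_left_mono[OF expectation_srw_norm_le assms(2)] by (simp add: mult.assoc)
  also have "\<dots> = measure_pmf.expectation (srw n :: (int^'d) pmf) (\<lambda>s. c - B * norm (lattice_to_real s))"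
    by (simp add: integrable_srw)
  also have "\<dots> \<le> measure_pmf.expectation (srw n) f"
    using assms(1) by (intro integral_mono integrable_srw)
  finally show ?thesis
    using exp_expectation_srw_le[of n f] by (meson exp_le_cancel_iff order_trans)
qed

lemma G_eps_exponent_deviation:
  assumes "L-lipschitz_on UNIV g" and "\<beta> \<ge> 0" and "\<epsilon> \<ge> 0"
  shows "\<bar>\<beta> * g (\<epsilon> *\<^sub>R lattice_to_real (s + x)) - \<beta> * g 0\<bar>
    \<le> \<beta> * L * \<epsilon> * norm (lattice_to_real x) + \<beta> * L * \<epsilon> * norm (lattice_to_real s)"
proof -
  let ?y = "\<epsilon> *\<^sub>R lattice_to_real (s + x)"
  have "\<bar>g ?y - g 0\<bar> \<le> L * norm ?y"
    using lipschitz_onD[OF assms(1), of ?y 0] by (simp add: dist_real_def)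
  also have "\<dots> \<le> L * (\<epsilon> * (norm (lattice_to_real x) + norm (lattice_to_real s)))"
    using assms(3) norm_triangle_ineq[of "lattice_to_real x" "lattice_to_real s"] lipschitz_on_nonneg[OF assms(1)]
    by (intro mult_left_mono) (simp_all add: lattice_to_real_add add.commute mult_left_mono)
  finally have "\<bar>g ?y - g 0\<bar> \<le> L * \<epsilon> * (norm (lattice_to_real x) + norm (lattice_to_real s))"
    by (simp add: mult.assoc)
  then have "\<beta> * \<bar>g ?y - g 0\<bar>
      \<le> \<beta> * (L * \<epsilon> * (norm (lattice_to_real x) + norm (lattice_to_real s)))"
    using assms(2) by (rule mult_left_mono)
  moreover have "\<bar>\<beta> * g ?y - \<beta> * g 0\<bar> = \<beta> * \<bar>g ?y - g 0\<bar>"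
    using assms(2) by (simp add: abs_mult flip: right_diff_distrib)
  ultimately show ?thesis
    by (simp add: distrib_left mult.assoc)
qed

lemma G_eps_le:
  fixes x :: "int^'d::finite"
  assumes "L-lipschitz_on UNIV g" and "\<beta> \<ge> 0" and "\<epsilon> \<ge> 0"
  shows "G_eps \<beta> g \<epsilon> t x \<le> 2 ^ CARD('d) * exp (\<beta> * g 0) *
    exp ((\<beta> * L + (\<beta> * L)\<^sup>2) * (\<epsilon> * norm (lattice_to_real x) + \<epsilon>\<^sup>2 * t))"
proof -
  let ?b = "\<beta> * L" and ?X = "norm (lattice_to_real x)"
  have b: "?b \<ge> 0" using lipschitz_on_nonneg[OF assms(1)] assms(2) by simp
  have "G_eps \<beta> g \<epsilon> t x \<le> 2 ^ CARD('d) * exp (\<beta> * g 0 + ?b * \<epsilon> * ?X + (?b * \<epsilon>)\<^sup>2 * t)"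
    unfolding G_eps_def
  proof (rule expectation_srw_exp_le)
    show "\<beta> * g (\<epsilon> *\<^sub>R lattice_to_real (s + x))
      \<le> \<beta> * g 0 + ?b * \<epsilon> * ?X + ?b * \<epsilon> * norm (lattice_to_real s)" for s
      using G_eps_exponent_deviation[OF assms, of s x] unfolding abs_le_iff by linarith
    show "?b * \<epsilon> \<ge> 0" using b assms(3) by simp
  qed
  also have "\<dots> = 2 ^ CARD('d) * exp (\<beta> * g 0) * exp (?b * (\<epsilon> * ?X) + ?b\<^sup>2 * (\<epsilon>\<^sup>2 * t))"
    unfolding mult.assoc exp_add[symmetric]
    by (rule arg_cong[where f = "\<lambda>y. 2 ^ CARD('d) * exp y"]) (simp add: algebra_simps power_mult_distrib)
  also have "\<dots> \<le> 2 ^ CARD('d) * exp (\<beta> * g 0) * exp ((?b + ?b\<^sup>2) * (\<epsilon> * ?X + \<epsilon>\<^sup>2 * t))"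
  proof -
    have "(?b + ?b\<^sup>2) * (\<epsilon> * ?X + \<epsilon>\<^sup>2 * t)
        = ?b * (\<epsilon> * ?X) + ?b\<^sup>2 * (\<epsilon>\<^sup>2 * t) + (?b\<^sup>2 * (\<epsilon> * ?X) + ?b * (\<epsilon>\<^sup>2 * t))"
      by (simp add: algebra_simps)
    moreover have "0 \<le> ?b\<^sup>2 * (\<epsilon> * ?X) + ?b * (\<epsilon>\<^sup>2 * t)"
      using b assms(3) by simp
    ultimately show ?thesis by simp
  qed
  finally show ?thesis .
qed

lemma G_eps_ge:
  fixes x :: "int^'d::finite"
  assumes "L-lipschitz_on UNIV g" and "\<beta> \<ge> 0" and "\<epsilon> \<ge> 0"
  shows "exp (\<beta> * g 0) * exp (- (\<beta> * L * (CARD('d) * ln 2 + 1)) * \<epsilon> * (norm (lattice_to_real x) + sqrt t))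
    \<le> G_eps \<beta> g \<epsilon> t x"
proof -
  let ?b = "\<beta> * L" and ?K = "CARD('d) * ln 2 + 1" and ?X = "norm (lattice_to_real x)"
  have b: "?b \<ge> 0" using lipschitz_on_nonneg[OF assms(1)] assms(2) by simp
  have "exp (\<beta> * g 0) * exp (- (?b * ?K) * \<epsilon> * (?X + sqrt t))
      = exp (\<beta> * g 0 - ?b * ?K * \<epsilon> * ?X - ?b * \<epsilon> * ?K * sqrt t)"
    unfolding exp_add[symmetric] by (rule arg_cong[where f = exp]) (simp add: algebra_simps)
  also have "\<dots> \<le> exp (\<beta> * g 0 - ?b * \<epsilon> * ?X - ?b * \<epsilon> * ?K * sqrt t)"
  proof -
    have "?b * \<epsilon> * ?X * 1 \<le> ?b * \<epsilon> * ?X * ?K"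
      using b assms(3) by (intro mult_left_mono) auto
    then show ?thesis by (simp add: mult_ac)
  qed
  also have "\<dots> \<le> G_eps \<beta> g \<epsilon> t x"
    unfolding G_eps_def
  proof (rule exp_le_expectation_srw_exp)
    show "\<beta> * g 0 - ?b * \<epsilon> * ?X - ?b * \<epsilon> * norm (lattice_to_real s)
      \<le> \<beta> * g (\<epsilon> *\<^sub>R lattice_to_real (s + x))" for s
      using G_eps_exponent_deviation[OF assms, of s x] unfolding abs_le_iff by linarith
    show "?b * \<epsilon> \<ge> 0" using b assms(3) by simp
  qed
  finally show ?thesis .
qed

theorem lemma5p4:
  fixes g :: "real^'d::finite \<Rightarrow> real" and \<beta> :: real
  assumes "CARD('d) \<ge> 3" and "\<beta> > 0" and "\<exists>L. L-lipschitz_on UNIV g"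
  shows "\<exists>C1 C2 C3 C4 :: real. C1 > 0 \<and> C2 > 0 \<and> C3 > 0 \<and> C4 > 0 \<and>
    (\<forall>\<epsilon>>0. \<forall>(t::nat) (x::int^'d).
      C1 * exp (- C2 * \<epsilon> * (norm (lattice_to_real x) + sqrt (real t))) \<le> G_eps \<beta> g \<epsilon> t x \<and>
      G_eps \<beta> g \<epsilon> t x \<le> C3 * exp (C4 * (\<epsilon> * norm (lattice_to_real x) + \<epsilon>^2 * real t)))"
proof -
  \<comment> \<open>The bounds hold in every dimension.\<close>
  obtain L0 where "L0-lipschitz_on UNIV g" using assms(3) by blast
  then have lip: "(max 1 L0)-lipschitz_on UNIV g" by (rule lipschitz_on_mono) auto
  define b where "b = \<beta> * max 1 L0"
  have b: "b > 0" using assms(2) by (simp add: b_def)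
  have K: "CARD('d) * ln 2 + 1 > (0::real)" by (simp add: add_nonneg_pos)
  show ?thesis
    by (rule exI[of _ "exp (\<beta> * g 0)"], rule exI[of _ "b * (CARD('d) * ln 2 + 1)"],
        rule exI[of _ "2 ^ CARD('d) * exp (\<beta> * g 0)"], rule exI[of _ "b + b\<^sup>2"])
      (use b K assms(2) G_eps_ge[OF lip] G_eps_le[OF lip] in \<open>auto simp: b_def add_pos_nonneg\<close>)
qed

end
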